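(* Every derivable separability judgment $\Sigma;\Gamma\vdash\tau:m$ has a derivation in which every occurrence of the conversion rule has, as its premise, an instance of the variable axiom. Equivalently, every derivable judgment is derivable in the system where the conversion rule is removed and replaced by the rule: from $(\alpha:m)\in\Gamma$ and $m\geq n$ infer $\Sigma;\Gamma\vdash\alpha:n$.
   Context: Type expressions: $\tau,\kappa ::= \alpha \mid \mathsf{float}\mid\mathsf{int}\mid\mathsf{bool}\mid t(\tau_1,\dots,\tau_n)\mid \tau\to\kappa\mid \tau_1\times\dots\times\tau_n\mid \forall\alpha.\tau\mid\exists\alpha.\tau\mid (\tau \text{ with } \kappa_1=\kappa_2)$ (the last is an equality guard), where $\alpha$ ranges over type variables and $t$ over type constructors. Separability modes are $\mathsf{Ind}<\mathsf{Sep}<\mathsf{Deepsep}$ (totally ordered). Mode composition: $\mathsf{Ind}\circ m=\mathsf{Ind}$, $\mathsf{Sep}\circ m=m$, $\mathsf{Deepsep}\circ m=\mathsf{Deepsep}$. A context $\Gamma$ is a finite list $\alpha_1:m_1,\dots,\alpha_k:m_k$; $\Gamma\le\Gamma'$ iff they have the same variables and pointwise $m\le m'$. A mode signature $\Sigma$ is a list of entries $t(\alpha_1:m_1,\dots,\alpha_n:m_n)$. The judgment $\Sigma;\Gamma\vdash\tau:m$ is defined by the rules: (variable axiom) if $(\alpha:m)\in\Gamma$ then $\Sigma;\Gamma\vdash\alpha:m$; (constructor) if $t(\alpha_1:m_1,\dots,\alpha_n:m_n)\in\Sigma$ and $\Sigma;\Gamma\vdash\tau_i:m\circ m_i$ for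 all $i$, then $\Sigma;\Gamma\vdash t(\tau_1,\dots,\tau_n):m$; (arrow) if $\Sigma;\Gamma\vdash\tau:m\circ\mathsf{Ind}$ and $\Sigma;\Gamma\vdash\kappa:m\circ\mathsf{Ind}$ then $\Sigma;\Gamma\vdash\tau\to\kappa:m$; (product) if $\Sigma;\Gamma\vdash\tau_i:m\circ\mathsf{Ind}$ for all $i$ then $\Sigma;\Gamma\vdash\tau_1\times\dots\times\tau_n:m$; (forall) if $\Sigma;\Gamma,\alpha:n\vdash\tau:m$ for some mode $n$ then $\Sigma;\Gamma\vdash\forall\alpha.\tau:m$; (exists) if $\Sigma;\Gamma,\alpha:\mathsf{Ind}\vdash\tau:m$ then $\Sigma;\Gamma\vdash\exists\alpha.\tau:m$; (conversion) if $\Sigma;\Gamma\vdash\tau:m$ and $m\ge n$ then $\Sigma;\Gamma\vdash\tau:n$; (guard) if for every $\Gamma'\ge\Gamma$ with $\Sigma;\Gamma'\vdash \kappa_1=\kappa_2$ we have $\Sigma;\Gamma'\vdash\tau:m$, then $\Sigma;\Gamma\vdash(\tau\text{ with }\kappa_1=\kappa_2):m$. Here $\Sigma;\Gamma\vdash\tau_1=\tau_2$ holds iff for every mode $m$, $\Sigma;\Gamma\vdash\tau_1:m \iff \Sigma;\Gamma\vdash\tau_2:m$. *)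

theory Defs
  imports Main
begin

datatype mode = Ind | Sep | Deepsep

fun mrank :: "mode \<Rightarrow> nat" where
  "mrank Ind = 0" | "mrank Sep = 1" | "mrank Deepsep = 2"

definition mode_le :: "mode \<Rightarrow> mode \<Rightarrow> bool" where
  "mode_le m n \<longleftrightarrow> mrank m \<le> mrank n"

fun mcomp :: "mode \<Rightarrow> mode \<Rightarrow> mode" where
  "mcomp Ind _ = Ind"
| "mcomp Sep m = m"
| "mcomp Deepsep _ = Deepsep"

type_synonym tcon = string

datatype ty =
    TVar nat
  | TFloat | TInt | TBool
  | TCon tcon "ty list"
  | TArrow ty ty
  | TProd "ty list"
  | TAll ty
  | TEx ty
  | TWith ty ty ty   \<comment> \<open>TWith \<tau> \<kappa>1 \<kappa>2 is (\<tau> with \<kappa>1 = \<kappa>2)\<close>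

text \<open>A context is a list of modes; TVar i refers to entry i, the most recently
  bound variable being entry 0 (binders extend the context at the front).
  (\<alpha>:m) \<in> \<Gamma> becomes  i < length \<Gamma> \<and> \<Gamma>!i = m.\<close>
type_synonym ctx = "mode list"

text \<open>A mode signature: entries t(\<alpha>1:m1,...,\<alpha>n:mn) as pairs (t, [m1,...,mn]).\<close>
type_synonym sig = "(tcon \<times> mode list) list"

definition ctx_le :: "ctx \<Rightarrow> ctx \<Rightarrow> bool" where
  "ctx_le \<Gamma> \<Gamma>' \<longleftrightarrow> length \<Gamma> = length \<Gamma>' \<and> (\<forall>i<length \<Gamma>. mode_le (\<Gamma>!i) (\<Gamma>'!i))"

text \<open>The guard rule mentions the judgment negatively (through the equality
  judgment), so the system is stratified: the guard premise refers to an
  equality oracle E, which is tied back to the judgment itself below.\<close>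

inductive der :: "(ctx \<Rightarrow> ty \<Rightarrow> ty \<Rightarrow> bool) \<Rightarrow> sig \<Rightarrow> ctx \<Rightarrow> ty \<Rightarrow> mode \<Rightarrow> bool"
  for E :: "ctx \<Rightarrow> ty \<Rightarrow> ty \<Rightarrow> bool" and \<Sigma> :: sig where
  der_var: "i < length \<Gamma> \<Longrightarrow> \<Gamma>!i = m \<Longrightarrow> der E \<Sigma> \<Gamma> (TVar i) m"
| der_con: "(t, ms) \<in> set \<Sigma> \<Longrightarrow> length ts = length ms \<Longrightarrow>
     (\<forall>i<length ts. der E \<Sigma> \<Gamma> (ts!i) (mcomp m (ms!i))) \<Longrightarrow> der E \<Sigma> \<Gamma> (TCon t ts) m"
| der_arrow: "der E \<Sigma> \<Gamma> \<tau> (mcomp m Ind) \<Longrightarrow> der E \<Sigma> \<Gamma> \<kappa> (mcomp m Ind) \<Longrightarrow>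
     der E \<Sigma> \<Gamma> (TArrow \<tau> \<kappa>) m"
| der_prod: "(\<forall>i<length ts. der E \<Sigma> \<Gamma> (ts!i) (mcomp m Ind)) \<Longrightarrow> der E \<Sigma> \<Gamma> (TProd ts) m"
| der_all: "der E \<Sigma> (n # \<Gamma>) \<tau> m \<Longrightarrow> der E \<Sigma> \<Gamma> (TAll \<tau>) m"
| der_ex: "der E \<Sigma> (Ind # \<Gamma>) \<tau> m \<Longrightarrow> der E \<Sigma> \<Gamma> (TEx \<tau>) m"
| der_conv: "der E \<Sigma> \<Gamma> \<tau> m \<Longrightarrow> mode_le n m \<Longrightarrow> der E \<Sigma> \<Gamma> \<tau> n"
| der_guard: "(\<forall>\<Gamma>'. ctx_le \<Gamma> \<Gamma>' \<longrightarrow> E \<Gamma>' \<kappa>1 \<kappa>2 \<longrightarrow> der E \<Sigma> \<Gamma>' \<tau> m) \<Longrightarrow>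
     der E \<Sigma> \<Gamma> (TWith \<tau> \<kappa>1 \<kappa>2) m"

inductive derR :: "(ctx \<Rightarrow> ty \<Rightarrow> ty \<Rightarrow> bool) \<Rightarrow> sig \<Rightarrow> ctx \<Rightarrow> ty \<Rightarrow> mode \<Rightarrow> bool"
  for E :: "ctx \<Rightarrow> ty \<Rightarrow> ty \<Rightarrow> bool" and \<Sigma> :: sig where
  derR_var: "i < length \<Gamma> \<Longrightarrow> \<Gamma>!i = m \<Longrightarrow> mode_le n m \<Longrightarrow> derR E \<Sigma> \<Gamma> (TVar i) n"
| derR_con: "(t, ms) \<in> set \<Sigma> \<Longrightarrow> length ts = length ms \<Longrightarrow>
     (\<forall>i<length ts. derR E \<Sigma> \<Gamma> (ts!i) (mcomp m (ms!i))) \<Longrightarrow> derR E \<Sigma> \<Gamma> (TCon t ts) m"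
| derR_arrow: "derR E \<Sigma> \<Gamma> \<tau> (mcomp m Ind) \<Longrightarrow> derR E \<Sigma> \<Gamma> \<kappa> (mcomp m Ind) \<Longrightarrow>
     derR E \<Sigma> \<Gamma> (TArrow \<tau> \<kappa>) m"
| derR_prod: "(\<forall>i<length ts. derR E \<Sigma> \<Gamma> (ts!i) (mcomp m Ind)) \<Longrightarrow> derR E \<Sigma> \<Gamma> (TProd ts) m"
| derR_all: "derR E \<Sigma> (n # \<Gamma>) \<tau> m \<Longrightarrow> derR E \<Sigma> \<Gamma> (TAll \<tau>) m"
| derR_ex: "derR E \<Sigma> (Ind # \<Gamma>) \<tau> m \<Longrightarrow> derR E \<Sigma> \<Gamma> (TEx \<tau>) m"
| derR_guard: "(\<forall>\<Gamma>'. ctx_le \<Gamma> \<Gamma>' \<longrightarrow> E \<Gamma>' \<kappa>1 \<kappa>2 \<longrightarrow> derR E \<Sigma> \<Gamma>' \<tau> m) \<Longrightarrow>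
     derR E \<Sigma> \<Gamma> (TWith \<tau> \<kappa>1 \<kappa>2) m"

definition jeq :: "(ctx \<Rightarrow> ty \<Rightarrow> mode \<Rightarrow> bool) \<Rightarrow> ctx \<Rightarrow> ty \<Rightarrow> ty \<Rightarrow> bool" where
  "jeq J \<Gamma> k1 k2 \<longleftrightarrow> (\<forall>m. J \<Gamma> k1 m \<longleftrightarrow> J \<Gamma> k2 m)"

text \<open>Level n: the guard's equality premise is evaluated with level n-1.
  A derivation of tau only involves guards on proper subterms of tau, so
  evaluating tau at level size tau uses, for every guard type kappa, a level
  strictly above size kappa; this is the well-founded reading of the rules.\<close>
fun derN :: "nat \<Rightarrow> sig \<Rightarrow> ctx \<Rightarrow> ty \<Rightarrow> mode \<Rightarrow> bool" where
  "derN 0 \<Sigma> = der (\<lambda>_ _ _. False) \<Sigma>"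
| "derN (Suc n) \<Sigma> = der (jeq (derN n \<Sigma>)) \<Sigma>"

fun derRN :: "nat \<Rightarrow> sig \<Rightarrow> ctx \<Rightarrow> ty \<Rightarrow> mode \<Rightarrow> bool" where
  "derRN 0 \<Sigma> = derR (\<lambda>_ _ _. False) \<Sigma>"
| "derRN (Suc n) \<Sigma> = derR (jeq (derRN n \<Sigma>)) \<Sigma>"

definition judg :: "sig \<Rightarrow> ctx \<Rightarrow> ty \<Rightarrow> mode \<Rightarrow> bool" where
  "judg \<Sigma> \<Gamma> \<tau> m \<longleftrightarrow> derN (size \<tau>) \<Sigma> \<Gamma> \<tau> m"

definition judgR :: "sig \<Rightarrow> ctx \<Rightarrow> ty \<Rightarrow> mode \<Rightarrow> bool" where
  "judgR \<Sigma> \<Gamma> \<tau> m \<longleftrightarrow> derRN (size \<tau>) \<Sigma> \<Gamma> \<tau> m"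

end

theory Submission
  imports Defs
begin

text \<open>In the restricted system conversion is admissible: every rule other than the variable
  rule asks its premises for modes of the form m \<circ> m', which is monotone in m, so lowering the
  mode of a conclusion can be pushed up the derivation until it reaches a variable. Hence the
  two systems derive the same judgments for every equality oracle, and by induction on the
  level of the stratification also the same stratified judgments.\<close>

lemma mode_le_refl [simp]: "mode_le m m"
  by (simp add: mode_le_def)

lemma mode_le_trans: "mode_le a b \<Longrightarrow> mode_le b c \<Longrightarrow> mode_le a c"
  by (simp add: mode_le_def)

lemma mcomp_mono_left: "mode_le n m \<Longrightarrow> mode_le (mcomp n k) (mcomp m k)"
  by (cases n; cases m; cases k; simp add: mode_le_def)

lemma derR_conv: "derR E \<Sigma> \<Gamma> \<tau> m \<Longrightarrow> mode_le n m \<Longrightarrow> derR E \<Sigma> \<Gamma> \<tau> n"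
proof (induction arbitrary: n rule: derR.induct)
  case derR_var
  then show ?case by (blast intro: derR.derR_var mode_le_trans)
next
  case (derR_con t ms)
  then show ?case by (intro derR.derR_con[of t ms]) (auto intro: mcomp_mono_left)
next
  case derR_arrow
  then show ?case by (intro derR.derR_arrow) (auto intro: mcomp_mono_left)
next
  case derR_prod
  then show ?case by (intro derR.derR_prod) (auto intro: mcomp_mono_left)
qed (auto intro: derR.intros)

lemma der_imp_derR: "der E \<Sigma> \<Gamma> \<tau> m \<Longrightarrow> derR E \<Sigma> \<Gamma> \<tau> m"
proof (induction rule: der.induct)
  case der_var
  then show ?case by (blast intro: derR.derR_var mode_le_refl)
next
  case (der_con t ms)
  then show ?case by (intro derR.derR_con[of t ms]) auto
next
  case der_conv
  then show ?case by (blast intro: derR_conv)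
qed (auto intro: derR.intros)

lemma derR_imp_der: "derR E \<Sigma> \<Gamma> \<tau> m \<Longrightarrow> der E \<Sigma> \<Gamma> \<tau> m"
proof (induction rule: derR.induct)
  case derR_var
  then show ?case by (blast intro: der.der_var der.der_conv)
next
  case (derR_con t ms)
  then show ?case by (intro der.der_con[of t ms]) auto
qed (auto intro: der.intros)

lemma der_eq_derR: "der E \<Sigma> = derR E \<Sigma>"
  by (intro ext iffI) (auto intro: der_imp_derR derR_imp_der)

lemma derN_eq_derRN: "derN n \<Sigma> = derRN n \<Sigma>"
  by (induction n) (simp_all add: der_eq_derR)

theorem mainTheorem1:
  fixes \<Sigma> :: sig and \<Gamma> :: ctx and \<tau> :: ty and m :: mode
  assumes "judg \<Sigma> \<Gamma> \<tau> m"
  shows "judgR \<Sigma> \<Gamma> \<tau> m"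
  using assms by (simp add: judg_def judgR_def derN_eq_derRN)

end
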